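(* Consider the gossip dynamics with stubborn agents and block communication probabilities described in the context (with $0<n_{r1}\le n_1$, $0<n_{r2}\le n_2$, $n_{r1}+n_{r2}<n$, $w_s,w_d>0$, $w_s\neq w_d$, $w_s(n_1^2+n_2^2)+2w_dn_1n_2=1$, and fixed stubborn initial vector $\mathbf{x}^s=x^s(0)=[(\mathbf{x}^{s1})^T\ (\mathbf{x}^{s2})^T]^T$, where $\mathbf{x}^{sk}$ stacks the states of stubborn agents of community $k$). Then, with $a_i=w_sn_i+w_dn_{3-i}$ for $i=1,2$, there exist constants $\tilde w_{s1},\tilde w_{s2},\tilde w_d$ depending only on $w_s,w_d,n_{r1},n_{r2}$ such that $$(I-\bar A)^{-1}=\begin{bmatrix}\frac1{a_1}(I_{n_{r1}}-\tilde w_{s1}\mathbf{1}_{n_{r1}}\mathbf{1}_{n_{r1}}^T) & \tilde w_d\mathbf{1}_{n_{r1}}\mathbf{1}_{n_{r2}}^T\\ \tilde w_d\mathbf{1}_{n_{r2}}\mathbf{1}_{n_{r1}}^T & \frac1{a_2}(I_{n_{r2}}-\tilde w_{s2}\mathbf{1}_{n_{r2}}\mathbf{1}_{n_{r2}}^T)\end{bmatrix}$$ (block decomposition by regular agents of community 1, then community 2). Consequently $$\mathbf{x}^r:=(I-\bar A)^{-1}\bar B\mathbf{x}^s=[\chi_1\mathbf{1}_{n_{r1}}^T,\ \chi_2\mathbf{1}_{n_{r2}}^T]^T,$$ where $$\chi_1=\tfrac1\delta(\gamma_{11}\mathbf{1}_{n_{s1}}^T\mathbf{x}^{s1}+\gamma_{12}\mathbf{1}_{n_{s2}}^T\mathbf{x}^{s2}),\qquad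 \chi_2=\tfrac1\delta(\gamma_{21}\mathbf{1}_{n_{s2}}^T\mathbf{x}^{s2}+\gamma_{22}\mathbf{1}_{n_{s1}}^T\mathbf{x}^{s1}),$$ with $\gamma_{11}=w_sw_dn_1+w_d^2n_{r2}+w_s^2n_{s2}$, $\gamma_{12}=w_d(w_dn_1+w_sn_2)$, $\gamma_{21}=w_sw_dn_2+w_d^2n_{r1}+w_s^2n_{s1}$, $\gamma_{22}=w_d(w_dn_2+w_sn_1)$, $\delta=w_s^2n_{s1}n_{s2}+w_sw_d(n_1n_{s1}+n_2n_{s2})+w_d^2(n_1n_2-n_{r1}n_{r2})$, and $\mathbf{1}_{n_{sk}}^T\mathbf{x}^{sk}$ is defined to be $0$ if $n_{sk}=0$.
   Context: Agents $\mathcal{V}=\{1,\dots,n\}$, $n=n_1+n_2$, form two communities $\mathcal{V}_1=\{1,\dots,n_1\}$, $\mathcal{V}_2=\{n_1+1,\dots,n\}$; community $k$ consists of $n_{rk}$ regular agents $\mathcal{V}_{rk}$ and $n_{sk}=n_k-n_{rk}$ stubborn agents $\mathcal{V}_{sk}$; $\mathcal{V}_r=\mathcal{V}_{r1}\cup\mathcal{V}_{r2}$, $\mathcal{V}_s=\mathcal{V}_{s1}\cup\mathcal{V}_{s2}$. Let $w_{ij}=w_s$ if $i,j$ are in the same community and $w_{ij}=w_d$ otherwise. For $i,j\in\mathcal{V}$ define $R^{ij}=I-\frac12(\mathbf{e}_i-\mathbf{e}_j)(\mathbf{e}_i-\mathbf{e}_j)^T$ if $i,j\in\mathcal{V}_r$;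 $R^{ij}=I-\frac12\mathbf{e}_i(\mathbf{e}_i-\mathbf{e}_j)^T$ if $i\in\mathcal{V}_r,j\in\mathcal{V}_s$; $R^{ij}=I-\frac12\mathbf{e}_j(\mathbf{e}_j-\mathbf{e}_i)^T$ if $i\in\mathcal{V}_s,j\in\mathcal{V}_r$; $R^{ij}=I$ if $i,j\in\mathcal{V}_s$. At each time $t\in\mathbb{N}$, independently, an ordered pair $(i,j)$ is drawn with probability $w_{ij}$ and $R(t)=R^{ij}$; states evolve by $x(t+1)=R(t)x(t)$. With $x^r(t)$, $x^s(t)$ the stacked states of regular and stubborn agents, $x^r(t+1)=A(t)x^r(t)+B(t)x^s(t)$, where $(A(t)\ B(t))$ are the rows of $R(t)$ indexed by regular agents, columns split into regular ($A(t)$) and stubborn ($B(t)$) agents. $\bar A=\mathbb{E}\{A(t)\}$, $\bar B=\mathbb{E}\{B(t)\}$. *)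

theory Defs
  imports "Jordan_Normal_Form.Matrix"
begin

text \<open>Agents are labelled 0..n-1 (n = n1+n2). Community 1 = {0..<n1}, community 2 = {n1..<n}.
Labelling convention: regular agents of community 1 are {0..<nr1}, its stubborn agents {nr1..<n1};
regular agents of community 2 are {n1..<n1+nr2}, its stubborn agents {n1+nr2..<n}.\<close>

definition ones_vec :: "nat \<Rightarrow> real vec" where
  "ones_vec k = vec k (\<lambda>_. 1)"

definition outer :: "real vec \<Rightarrow> real vec \<Rightarrow> real mat" where
  "outer u v = mat (dim_vec u) (dim_vec v) (\<lambda>(p,q). u $ p * v $ q)"

definition is_regular :: "nat \<Rightarrow> nat \<Rightarrow> nat \<Rightarrow> nat \<Rightarrow> bool" where
  "is_regular n1 nr1 nr2 i \<longleftrightarrow> i < nr1 \<or> (n1 \<le> i \<and> i < n1 + nr2)"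

definition wgt :: "real \<Rightarrow> real \<Rightarrow> nat \<Rightarrow> nat \<Rightarrow> nat \<Rightarrow> real" where
  "wgt ws wd n1 i j = (if (i < n1) = (j < n1) then ws else wd)"

definition Rmat :: "nat \<Rightarrow> nat \<Rightarrow> nat \<Rightarrow> nat \<Rightarrow> nat \<Rightarrow> nat \<Rightarrow> real mat" where
  "Rmat n n1 nr1 nr2 i j =
     (let ei = unit_vec n i; ej = unit_vec n j; reg = is_regular n1 nr1 nr2 in
      if reg i \<and> reg j then 1\<^sub>m n - (1/2) \<cdot>\<^sub>m outer (ei - ej) (ei - ej)
      else if reg i \<and> \<not> reg j then 1\<^sub>m n - (1/2) \<cdot>\<^sub>m outer ei (ei - ej)
      else if \<not> reg i \<and> reg j then 1\<^sub>m n - (1/2) \<cdot>\<^sub>m outer ej (ej - ei)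
      else 1\<^sub>m n)"

definition Rbar :: "real \<Rightarrow> real \<Rightarrow> nat \<Rightarrow> nat \<Rightarrow> nat \<Rightarrow> nat \<Rightarrow> real mat" where
  "Rbar ws wd n1 n2 nr1 nr2 =
     mat (n1+n2) (n1+n2) (\<lambda>(p,q). \<Sum>i<n1+n2. \<Sum>j<n1+n2.
        wgt ws wd n1 i j * Rmat (n1+n2) n1 nr1 nr2 i j $$ (p,q))"

definition reg_idx :: "nat \<Rightarrow> nat \<Rightarrow> nat \<Rightarrow> nat" where
  "reg_idx n1 nr1 p = (if p < nr1 then p else n1 + (p - nr1))"

definition stub_idx :: "nat \<Rightarrow> nat \<Rightarrow> nat \<Rightarrow> nat \<Rightarrow> nat" where
  "stub_idx n1 nr1 nr2 q = (if q < n1 - nr1 then nr1 + q else n1 + nr2 + (q - (n1 - nr1)))"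

definition Abar :: "real \<Rightarrow> real \<Rightarrow> nat \<Rightarrow> nat \<Rightarrow> nat \<Rightarrow> nat \<Rightarrow> real mat" where
  "Abar ws wd n1 n2 nr1 nr2 = mat (nr1+nr2) (nr1+nr2)
     (\<lambda>(p,q). Rbar ws wd n1 n2 nr1 nr2 $$ (reg_idx n1 nr1 p, reg_idx n1 nr1 q))"

definition Bbar :: "real \<Rightarrow> real \<Rightarrow> nat \<Rightarrow> nat \<Rightarrow> nat \<Rightarrow> nat \<Rightarrow> real mat" where
  "Bbar ws wd n1 n2 nr1 nr2 = mat (nr1+nr2) ((n1 - nr1) + (n2 - nr2))
     (\<lambda>(p,q). Rbar ws wd n1 n2 nr1 nr2 $$ (reg_idx n1 nr1 p, stub_idx n1 nr1 nr2 q))"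

end

theory Submission
  imports Defs "Jordan_Normal_Form.Determinant"
begin

text \<open>Order the regular agents as two blocks of sizes \<open>nr1\<close> and \<open>nr2\<close>. A gossip step touching a
regular agent \<open>p\<close> changes row \<open>p\<close> only through \<open>e\<^sub>i - e\<^sub>j\<close>, so in such a row the expected update
matrix is \<open>[p = q] (1 - \<Sum>\<^sub>j w\<^sub>p\<^sub>j) + w\<^sub>p\<^sub>q\<close>. Hence \<open>I - Abar\<close> is \<open>diag(a1 I, a2 I)\<close> minus the
matrix equal to \<open>ws\<close> or \<open>wd\<close> on each pair of blocks, and \<open>Bbar x\<^sup>s\<close> is constant on each block.
Matrices "block-constant diagonal plus block-constant" are closed under products and send
block-constant vectors to block-constant vectors, all computations taking place on \<open>2 \<times> 2\<close> data.
So \<open>I - Abar\<close> is inverted inside this class by solving a \<open>2 \<times> 2\<close> linear system of determinant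
\<open>\<delta>\<close>, and a right inverse of a square matrix is also a left inverse.\<close>

definition two_block_mat :: "nat \<Rightarrow> nat \<Rightarrow> (bool \<Rightarrow> real) \<Rightarrow> (bool \<Rightarrow> bool \<Rightarrow> real) \<Rightarrow> real mat" where
  "two_block_mat r1 r2 d e =
     mat (r1 + r2) (r1 + r2) (\<lambda>(i, j). (if i = j then d (i < r1) else 0) + e (i < r1) (j < r1))"

definition two_block_vec :: "nat \<Rightarrow> nat \<Rightarrow> (bool \<Rightarrow> real) \<Rightarrow> real vec" where
  "two_block_vec r1 r2 c = vec (r1 + r2) (\<lambda>i. c (i < r1))"

lemma sum_lessThan_add:
  fixes f :: "nat \<Rightarrow> 'a::comm_monoid_add"
  shows "(\<Sum>j<k + l. f j) = (\<Sum>j<k. f j) + (\<Sum>j\<in>{k..<k + l}. f j)"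
  by (simp add: lessThan_atLeast0 sum.atLeastLessThan_concat)

lemma sum_block_indicator:
  fixes g :: "bool \<Rightarrow> real"
  shows "(\<Sum>j<k + l. g (j < k)) = real k * g True + real l * g False"
  by (simp add: sum_lessThan_add)

lemma two_block_mat_carrier: "two_block_mat r1 r2 d e \<in> carrier_mat (r1 + r2) (r1 + r2)"
  by (simp add: two_block_mat_def)

lemma two_block_mat_mult:
  "two_block_mat r1 r2 d e * two_block_mat r1 r2 d' e' =
   two_block_mat r1 r2 (\<lambda>x. d x * d' x)
     (\<lambda>x y. d x * e' x y + e x y * d' y + real r1 * e x True * e' True y + real r2 * e x False * e' False y)"
  (is "_ = ?P")
proof (rule eq_matI)
  fix i k assume "i < dim_row ?P" "k < dim_col ?P"
  then have i: "i < r1 + r2" and k: "k < r1 + r2" by (auto simp: two_block_mat_def)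
  let ?x = "i < r1" and ?y = "k < r1"
  have "(two_block_mat r1 r2 d e * two_block_mat r1 r2 d' e') $$ (i, k) =
     (\<Sum>j<r1 + r2. ((if i = j then d ?x else 0) + e ?x (j < r1)) * ((if j = k then d' (j < r1) else 0) + e' (j < r1) ?y))"
    using i k by (simp add: two_block_mat_def scalar_prod_def lessThan_atLeast0)
  also have "\<dots> = (\<Sum>j<r1 + r2. if j = i then d ?x * ((if j = k then d' (j < r1) else 0) + e' (j < r1) ?y) else 0)
      + (\<Sum>j<r1 + r2. if j = k then e ?x (j < r1) * d' (j < r1) else 0)
      + (\<Sum>j<r1 + r2. e ?x (j < r1) * e' (j < r1) ?y)"
    unfolding sum.distrib[symmetric] by (rule sum.cong) (auto simp: algebra_simps)
  also have "\<dots> = (if i = k then d ?x * d' ?x else 0) + d ?x * e' ?x ?y + e ?x ?y * d' ?y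
      + (real r1 * (e ?x True * e' True ?y) + real r2 * (e ?x False * e' False ?y))"
    using i k by (simp add: sum_block_indicator[where g = "\<lambda>b. e ?x b * e' b ?y"] algebra_simps)
  finally show "(two_block_mat r1 r2 d e * two_block_mat r1 r2 d' e') $$ (i, k) = ?P $$ (i, k)"
    using i k by (simp add: two_block_mat_def algebra_simps)
qed (simp_all add: two_block_mat_def)

lemma two_block_mat_mult_vec:
  "two_block_mat r1 r2 d e *\<^sub>v two_block_vec r1 r2 c =
   two_block_vec r1 r2 (\<lambda>x. d x * c x + real r1 * e x True * c True + real r2 * e x False * c False)"
  (is "_ = ?v")
proof (rule eq_vecI)
  fix i assume "i < dim_vec ?v"
  then have i: "i < r1 + r2" by (simp add: two_block_vec_def)
  have "(two_block_mat r1 r2 d e *\<^sub>v two_block_vec r1 r2 c) $ i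
     = (\<Sum>j<r1 + r2. (if j = i then d (i < r1) * c (j < r1) else 0) + e (i < r1) (j < r1) * c (j < r1))"
    using i by (simp add: two_block_mat_def two_block_vec_def scalar_prod_def lessThan_atLeast0)
      (rule sum.cong, auto simp: algebra_simps)
  also have "\<dots> = ?v $ i"
    using i by (simp add: two_block_vec_def sum.distrib sum_block_indicator[where g = "\<lambda>b. c b * e (i < r1) b"]
        algebra_simps)
  finally show "(two_block_mat r1 r2 d e *\<^sub>v two_block_vec r1 r2 c) $ i = ?v $ i" .
qed (simp add: two_block_mat_def two_block_vec_def)

lemma one_mat_eq_two_block_mat: "1\<^sub>m (r1 + r2) = two_block_mat r1 r2 (\<lambda>_. 1) (\<lambda>_ _. 0)"
  by (rule eq_matI) (auto simp: two_block_mat_def)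

lemma two_block_mat_inverts:
  assumes "\<And>x. d x * d' x = 1"
    and "\<And>x y. d x * e' x y + e x y * d' y + real r1 * e x True * e' True y + real r2 * e x False * e' False y = 0"
  shows "inverts_mat (two_block_mat r1 r2 d e) (two_block_mat r1 r2 d' e') \<and>
    inverts_mat (two_block_mat r1 r2 d' e') (two_block_mat r1 r2 d e)"
proof -
  have "two_block_mat r1 r2 d e * two_block_mat r1 r2 d' e' = 1\<^sub>m (r1 + r2)"
    unfolding two_block_mat_mult one_mat_eq_two_block_mat by (simp add: assms)
  with mat_mult_left_right_inverse[OF two_block_mat_carrier two_block_mat_carrier]
  show ?thesis
    by (simp add: inverts_mat_def two_block_mat_def)
qed

lemma two_block_vec_eq_append:
  "two_block_vec r1 r2 c = (c True \<cdot>\<^sub>v ones_vec r1) @\<^sub>v (c False \<cdot>\<^sub>v ones_vec r2)"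
  by (rule eq_vecI) (auto simp: two_block_vec_def ones_vec_def)

lemma four_block_mat_eq_two_block_mat:
  "four_block_mat
     (d1 \<cdot>\<^sub>m (1\<^sub>m r1 - t1 \<cdot>\<^sub>m outer (ones_vec r1) (ones_vec r1)))
     (f \<cdot>\<^sub>m outer (ones_vec r1) (ones_vec r2))
     (f \<cdot>\<^sub>m outer (ones_vec r2) (ones_vec r1))
     (d2 \<cdot>\<^sub>m (1\<^sub>m r2 - t2 \<cdot>\<^sub>m outer (ones_vec r2) (ones_vec r2)))
   = two_block_mat r1 r2 (\<lambda>x. if x then d1 else d2)
       (\<lambda>x y. if x \<noteq> y then f else if x then - d1 * t1 else - d2 * t2)"
  by (rule eq_matI) (auto simp: two_block_mat_def outer_def ones_vec_def algebra_simps)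

text \<open>On block-constant vectors \<open>A = two_block_mat r1 r2 a (-W)\<close> acts through the \<open>2 \<times> 2\<close> matrix
\<open>K = diag(a1, a2) - W diag(r1, r2)\<close>; \<open>\<delta> = det K\<close>, and \<open>g1\<close>, \<open>g2\<close> are the diagonal entries of
\<open>adj(K) W\<close>, whose off-diagonal entries are \<open>wd a2\<close> and \<open>wd a1\<close>.\<close>

lemma two_block_inverse_first_row:
  fixes a1 a2 ws wd r1 r2 g1 g2 \<delta> s1 s2 :: real
  assumes nonzero: "a1 \<noteq> 0" "a2 \<noteq> 0" "\<delta> \<noteq> 0"
    and g1_eq: "g1 = ws * a2 + r2 * (wd\<^sup>2 - ws\<^sup>2)" and g2_eq: "g2 = ws * a1 + r1 * (wd\<^sup>2 - ws\<^sup>2)"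
    and \<delta>_eq: "\<delta> = (a1 - ws * r1) * (a2 - ws * r2) - wd\<^sup>2 * r1 * r2"
  shows "a1 * (g1 / (a1 * \<delta>)) - ws / a1 - r1 * ws * (g1 / (a1 * \<delta>)) - r2 * wd * (wd / \<delta>) = 0"
    and "a1 * (wd / \<delta>) - wd / a2 - r1 * ws * (wd / \<delta>) - r2 * wd * (g2 / (a2 * \<delta>)) = 0"
    and "1 / a1 * (ws * s1 + wd * s2) + r1 * (g1 / (a1 * \<delta>)) * (ws * s1 + wd * s2) + r2 * (wd / \<delta>) * (wd * s1 + ws * s2)
      = (g1 * s1 + wd * a2 * s2) / \<delta>"
proof -
  have "a1 * (g1 / (a1 * \<delta>)) - ws / a1 - r1 * ws * (g1 / (a1 * \<delta>)) - r2 * wd * (wd / \<delta>)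
      = (a1 * g1 - ws * \<delta> - r1 * ws * g1 - r2 * wd\<^sup>2 * a1) / (a1 * \<delta>)"
    using nonzero by (simp add: field_simps power2_eq_square)
  also have "a1 * g1 - ws * \<delta> - r1 * ws * g1 - r2 * wd\<^sup>2 * a1 = 0"
    unfolding g1_eq \<delta>_eq by (simp add: algebra_simps power2_eq_square)
  finally show "a1 * (g1 / (a1 * \<delta>)) - ws / a1 - r1 * ws * (g1 / (a1 * \<delta>)) - r2 * wd * (wd / \<delta>) = 0"
    by simp
  have "a1 * (wd / \<delta>) - wd / a2 - r1 * ws * (wd / \<delta>) - r2 * wd * (g2 / (a2 * \<delta>))
      = wd * (a1 * a2 - \<delta> - r1 * ws * a2 - r2 * g2) / (a2 * \<delta>)"
    using nonzero by (simp add: field_simps)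
  also have "a1 * a2 - \<delta> - r1 * ws * a2 - r2 * g2 = 0"
    unfolding g2_eq \<delta>_eq by (simp add: algebra_simps power2_eq_square)
  finally show "a1 * (wd / \<delta>) - wd / a2 - r1 * ws * (wd / \<delta>) - r2 * wd * (g2 / (a2 * \<delta>)) = 0"
    by simp
  have "1 / a1 * (ws * s1 + wd * s2) + r1 * (g1 / (a1 * \<delta>)) * (ws * s1 + wd * s2) + r2 * (wd / \<delta>) * (wd * s1 + ws * s2)
      = ((ws * s1 + wd * s2) * (\<delta> + r1 * g1) + r2 * wd * a1 * (wd * s1 + ws * s2)) / (a1 * \<delta>)"
    using nonzero by (simp add: field_simps)
  also have "(ws * s1 + wd * s2) * (\<delta> + r1 * g1) + r2 * wd * a1 * (wd * s1 + ws * s2) = a1 * (g1 * s1 + wd * a2 * s2)"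
    unfolding g1_eq \<delta>_eq by (simp add: algebra_simps power2_eq_square)
  finally show "1 / a1 * (ws * s1 + wd * s2) + r1 * (g1 / (a1 * \<delta>)) * (ws * s1 + wd * s2) + r2 * (wd / \<delta>) * (wd * s1 + ws * s2)
      = (g1 * s1 + wd * a2 * s2) / \<delta>"
    using nonzero by simp
qed

lemma two_block_mat_inverse:
  fixes a1 a2 ws wd g1 g2 \<delta> :: real
  assumes nonzero: "a1 \<noteq> 0" "a2 \<noteq> 0" "\<delta> \<noteq> 0"
    and g1_eq: "g1 = ws * a2 + real r2 * (wd\<^sup>2 - ws\<^sup>2)" and g2_eq: "g2 = ws * a1 + real r1 * (wd\<^sup>2 - ws\<^sup>2)"
    and \<delta>_eq: "\<delta> = (a1 - ws * real r1) * (a2 - ws * real r2) - wd\<^sup>2 * real r1 * real r2"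
  defines "A \<equiv> two_block_mat r1 r2 (\<lambda>x. if x then a1 else a2) (\<lambda>x y. - (if x = y then ws else wd))"
    and "B \<equiv> two_block_mat r1 r2 (\<lambda>x. if x then 1 / a1 else 1 / a2)
      (\<lambda>x y. if x \<noteq> y then wd / \<delta> else if x then g1 / (a1 * \<delta>) else g2 / (a2 * \<delta>))"
  shows "inverts_mat A B" and "inverts_mat B A"
    and "B *\<^sub>v two_block_vec r1 r2 (\<lambda>x. if x then ws * s1 + wd * s2 else wd * s1 + ws * s2)
      = two_block_vec r1 r2 (\<lambda>x. if x then (g1 * s1 + wd * a2 * s2) / \<delta> else (g2 * s2 + wd * a1 * s1) / \<delta>)"
      (is ?mult_vec)
proof -
  \<comment> \<open>The second block row is the first one with the two blocks interchanged.\<close>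
  have \<delta>_swap: "\<delta> = (a2 - ws * real r2) * (a1 - ws * real r1) - wd\<^sup>2 * real r2 * real r1"
    unfolding \<delta>_eq by (simp add: algebra_simps)
  note first = two_block_inverse_first_row[OF nonzero g1_eq g2_eq \<delta>_eq]
    and second = two_block_inverse_first_row[OF nonzero(2,1,3) g2_eq g1_eq \<delta>_swap]
  have "inverts_mat A B \<and> inverts_mat B A"
    unfolding A_def B_def
  proof (rule two_block_mat_inverts)
    show "(if x then a1 else a2) * (if x then 1 / a1 else 1 / a2) = 1" for x
      using nonzero by simp
  qed (use first(1,2) second(1,2) in \<open>auto simp: algebra_simps\<close>)
  then show "inverts_mat A B" "inverts_mat B A" by simp_all
  show ?mult_vec
    unfolding B_def two_block_mat_mult_vec
    by (rule arg_cong[where f = "two_block_vec r1 r2"], rule ext)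
      (use first(3) second(3)[of s2 s1] in \<open>auto simp: ac_simps\<close>)
qed

lemma wgt_commute: "wgt ws wd n1 i j = wgt ws wd n1 j i"
  by (auto simp: wgt_def)

lemma sum_wgt:
  assumes "p < n1 + n2"
  shows "(\<Sum>j<n1 + n2. wgt ws wd n1 p j) =
    (if p < n1 then ws * real n1 + wd * real n2 else ws * real n2 + wd * real n1)"
  using sum_block_indicator[where g = "\<lambda>b. if (p < n1) = b then ws else wd" and k = n1 and l = n2]
  by (simp add: wgt_def)

lemma sum_sum_wgt:
  "(\<Sum>i<n1 + n2. \<Sum>j<n1 + n2. wgt ws wd n1 i j) = ws * (real n1 ^ 2 + real n2 ^ 2) + 2 * wd * real n1 * real n2"
  using sum_block_indicator[where g = "\<lambda>b. if b then ws * real n1 + wd * real n2 else ws * real n2 + wd * real n1"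
      and k = n1 and l = n2]
  by (simp add: sum_wgt power2_eq_square algebra_simps)

lemma Rmat_regular_row:
  assumes "is_regular n1 nr1 nr2 p" "p < n" "q < n"
  shows "Rmat n n1 nr1 nr2 i j $$ (p, q) = of_bool (p = q)
     - 1/2 * ((of_bool (i = p) - of_bool (j = p)) * (of_bool (i = q) - of_bool (j = q)))"
  using assms by (auto simp: Rmat_def Let_def outer_def unit_vec_def)

lemma sum_pairwise_averaging_entry:
  fixes w :: "nat \<Rightarrow> nat \<Rightarrow> real"
  assumes w_commute: "\<And>i j. w i j = w j i" and "p < n" "q < n"
  shows "(\<Sum>i<n. \<Sum>j<n. w i j * ((of_bool (i = p) - of_bool (j = p)) * (of_bool (i = q) - of_bool (j = q))))
    = 2 * (of_bool (p = q) * (\<Sum>j<n. w p j) - w p q)"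
proof -
  have "w i j * ((of_bool (i = p) - of_bool (j = p)) * (of_bool (i = q) - of_bool (j = q))) =
     (if i = p then of_bool (p = q) * w p j else 0) + (if j = p then of_bool (p = q) * w i p else 0)
     - (if i = p then (if j = q then w p q else 0) else 0) - (if j = p then (if i = q then w p q else 0) else 0)"
    for i j using w_commute by auto
  then have "(\<Sum>i<n. \<Sum>j<n. w i j * ((of_bool (i = p) - of_bool (j = p)) * (of_bool (i = q) - of_bool (j = q))))
    = of_bool (p = q) * (\<Sum>j<n. w p j) + of_bool (p = q) * (\<Sum>i<n. w i p) - w p q - w p q"
    using assms(2,3) by (simp add: sum.distrib sum_subtractf sum_distrib_left sum.swap[of _ "{..<n}" "{..<n}"])
  then show ?thesis using w_commute by simp
qed

lemma Rbar_regular_row: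
  assumes "is_regular n1 nr1 nr2 p" "p < n1 + n2" "q < n1 + n2"
    and normalized: "ws * (real n1 ^ 2 + real n2 ^ 2) + 2 * wd * real n1 * real n2 = 1"
  shows "Rbar ws wd n1 n2 nr1 nr2 $$ (p, q) =
    of_bool (p = q) * (1 - (\<Sum>j<n1 + n2. wgt ws wd n1 p j)) + wgt ws wd n1 p q"
proof -
  let ?w = "wgt ws wd n1" and ?n = "n1 + n2"
  let ?L = "\<lambda>i j. (of_bool (i = p) - of_bool (j = p)) * (of_bool (i = q) - of_bool (j = q)) :: real"
  have "Rbar ws wd n1 n2 nr1 nr2 $$ (p, q) = (\<Sum>i<?n. \<Sum>j<?n. of_bool (p = q) * ?w i j - 1/2 * (?w i j * ?L i j))"
    using assms(1-3) by (simp add: Rbar_def Rmat_regular_row algebra_simps)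
  also have "\<dots> = of_bool (p = q) * (\<Sum>i<?n. \<Sum>j<?n. ?w i j) - 1/2 * (\<Sum>i<?n. \<Sum>j<?n. ?w i j * ?L i j)"
    by (simp add: sum_subtractf sum_distrib_left)
  also have "\<dots> = of_bool (p = q) - 1/2 * (2 * (of_bool (p = q) * (\<Sum>j<?n. ?w p j) - ?w p q))"
    unfolding sum_sum_wgt normalized sum_pairwise_averaging_entry[of ?w, OF wgt_commute assms(2,3)] by simp
  finally show ?thesis by (simp add: algebra_simps)
qed

lemma reg_idx_bounds:
  assumes "p < nr1 + nr2" "nr1 \<le> n1" "nr2 \<le> n2"
  shows "reg_idx n1 nr1 p < n1 + n2" "is_regular n1 nr1 nr2 (reg_idx n1 nr1 p)"
    "reg_idx n1 nr1 p < n1 \<longleftrightarrow> p < nr1"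
  using assms by (auto simp: reg_idx_def is_regular_def)

lemma reg_idx_eq_iff:
  assumes "p < nr1 + nr2" "q < nr1 + nr2" "nr1 \<le> n1"
  shows "reg_idx n1 nr1 p = reg_idx n1 nr1 q \<longleftrightarrow> p = q"
  using assms by (auto simp: reg_idx_def)

lemma stub_idx_bounds:
  assumes "q < (n1 - nr1) + (n2 - nr2)" "nr1 \<le> n1" "nr2 \<le> n2"
  shows "stub_idx n1 nr1 nr2 q < n1 + n2" "stub_idx n1 nr1 nr2 q < n1 \<longleftrightarrow> q < n1 - nr1"
  using assms by (auto simp: stub_idx_def)

lemma reg_idx_neq_stub_idx:
  assumes "p < nr1 + nr2" "nr1 \<le> n1"
  shows "reg_idx n1 nr1 p \<noteq> stub_idx n1 nr1 nr2 q"
  using assms by (auto simp: stub_idx_def reg_idx_def)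

lemma one_minus_Abar_eq_two_block_mat:
  assumes "nr1 \<le> n1" "nr2 \<le> n2"
    and normalized: "ws * (real n1 ^ 2 + real n2 ^ 2) + 2 * wd * real n1 * real n2 = 1"
  shows "1\<^sub>m (nr1 + nr2) - Abar ws wd n1 n2 nr1 nr2 =
    two_block_mat nr1 nr2 (\<lambda>x. if x then ws * real n1 + wd * real n2 else ws * real n2 + wd * real n1)
      (\<lambda>x y. - (if x = y then ws else wd))" (is "_ = ?T")
proof (rule eq_matI)
  fix p q assume "p < dim_row ?T" "q < dim_col ?T"
  then have p: "p < nr1 + nr2" and q: "q < nr1 + nr2" by (auto simp: two_block_mat_def)
  note rp = reg_idx_bounds[OF p assms(1,2)] and rq = reg_idx_bounds[OF q assms(1,2)]
  show "(1\<^sub>m (nr1 + nr2) - Abar ws wd n1 n2 nr1 nr2) $$ (p, q) = ?T $$ (p, q)"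
    using p q rp rq reg_idx_eq_iff[OF p q assms(1)]
    by (simp add: Abar_def two_block_mat_def Rbar_regular_row[OF rp(2,1) rq(1) normalized] sum_wgt)
      (simp add: wgt_def)
qed (simp_all add: two_block_mat_def Abar_def)

lemma Bbar_mult_vec:
  assumes "nr1 \<le> n1" "nr2 \<le> n2" and dim_xs: "dim_vec xs = (n1 - nr1) + (n2 - nr2)"
    and normalized: "ws * (real n1 ^ 2 + real n2 ^ 2) + 2 * wd * real n1 * real n2 = 1"
  defines "S1 \<equiv> \<Sum>q<n1 - nr1. xs $ q" and "S2 \<equiv> \<Sum>q\<in>{n1 - nr1..<(n1 - nr1) + (n2 - nr2)}. xs $ q"
  shows "Bbar ws wd n1 n2 nr1 nr2 *\<^sub>v xs =
    two_block_vec nr1 nr2 (\<lambda>x. if x then ws * S1 + wd * S2 else wd * S1 + ws * S2)" (is "_ = ?v")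
proof (rule eq_vecI)
  fix p assume "p < dim_vec ?v"
  then have p: "p < nr1 + nr2" by (simp add: two_block_vec_def)
  note rp = reg_idx_bounds[OF p assms(1,2)]
  let ?c = "\<lambda>q. if (p < nr1) = (q < n1 - nr1) then ws else wd"
  have "(Bbar ws wd n1 n2 nr1 nr2 *\<^sub>v xs) $ p = (\<Sum>q<(n1 - nr1) + (n2 - nr2). ?c q * xs $ q)"
    using p dim_xs rp stub_idx_bounds[OF _ assms(1,2)] reg_idx_neq_stub_idx[OF p assms(1)]
    by (simp add: Bbar_def scalar_prod_def lessThan_atLeast0)
      (rule sum.cong, simp_all add: wgt_def Rbar_regular_row[OF rp(2,1) _ normalized])
  also have "\<dots> = (\<Sum>q<n1 - nr1. ?c q * xs $ q) + (\<Sum>q\<in>{n1 - nr1..<(n1 - nr1) + (n2 - nr2)}. ?c q * xs $ q)"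
    by (rule sum_lessThan_add)
  also have "\<dots> = ?v $ p"
    using p by (simp add: two_block_vec_def S1_def S2_def sum_distrib_left)
  finally show "(Bbar ws wd n1 n2 nr1 nr2 *\<^sub>v xs) $ p = ?v $ p" .
qed (simp add: Bbar_def two_block_vec_def)

locale two_community_gossip =
  fixes n1 n2 nr1 nr2 :: nat and ws wd :: real
  assumes nr1_le: "nr1 \<le> n1" and nr2_le: "nr2 \<le> n2" and has_stubborn: "nr1 + nr2 < n1 + n2"
    and ws_pos: "0 < ws" and wd_pos: "0 < wd"
    and normalized: "ws * (real n1 ^ 2 + real n2 ^ 2) + 2 * wd * real n1 * real n2 = 1"
begin

text \<open>The constants of the theorem, written exactly as there, so that the interpreted lemmas match
its statement syntactically.\<close>

abbreviation a1 :: real where "a1 \<equiv> ws * real n1 + wd * real n2"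
abbreviation a2 :: real where "a2 \<equiv> ws * real n2 + wd * real n1"
abbreviation \<gamma>11 :: real where "\<gamma>11 \<equiv> ws*wd*real n1 + wd^2*real nr2 + ws^2*real (n2 - nr2)"
abbreviation \<gamma>12 :: real where "\<gamma>12 \<equiv> wd*(wd*real n1 + ws*real n2)"
abbreviation \<gamma>21 :: real where "\<gamma>21 \<equiv> ws*wd*real n2 + wd^2*real nr1 + ws^2*real (n1 - nr1)"
abbreviation \<gamma>22 :: real where "\<gamma>22 \<equiv> wd*(wd*real n2 + ws*real n1)"
abbreviation \<delta> :: real where
  "\<delta> \<equiv> ws^2*real (n1 - nr1)*real (n2 - nr2) + ws*wd*(real n1*real (n1 - nr1) + real n2*real (n2 - nr2))
      + wd^2*(real n1*real n2 - real nr1*real nr2)"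

lemma a1_pos: "0 < a1" and a2_pos: "0 < a2"
proof -
  have "0 < n1 \<or> 0 < n2"
    using has_stubborn by linarith
  then show "0 < a1" "0 < a2"
    using ws_pos wd_pos by (auto intro: add_pos_nonneg add_nonneg_pos)
qed

lemma delta_pos: "0 < \<delta>"
proof -
  have "0 \<le> real n1 * real n2 - real nr1 * real nr2"
    using nr1_le nr2_le by (simp add: mult_mono)
  moreover have "0 < n1 * (n1 - nr1) + n2 * (n2 - nr2)"
    using has_stubborn by (cases "nr1 < n1") auto
  then have "0 < real n1 * real (n1 - nr1) + real n2 * real (n2 - nr2)"
    by (metis of_nat_0_less_iff of_nat_add of_nat_mult)
  ultimately have "0 \<le> wd^2 * (real n1 * real n2 - real nr1 * real nr2)"
    and "0 < ws * wd * (real n1 * real (n1 - nr1) + real n2 * real (n2 - nr2))"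
    using ws_pos wd_pos by simp_all
  moreover have "0 \<le> ws^2 * real (n1 - nr1) * real (n2 - nr2)"
    by simp
  ultimately show ?thesis
    by linarith
qed

lemma denominators_nonzero: "a1 \<noteq> 0" "a2 \<noteq> 0" "\<delta> \<noteq> 0"
  using a1_pos a2_pos delta_pos by simp_all

lemma gamma11_eq: "\<gamma>11 = ws * a2 + real nr2 * (wd\<^sup>2 - ws\<^sup>2)"
  and gamma21_eq: "\<gamma>21 = ws * a1 + real nr1 * (wd\<^sup>2 - ws\<^sup>2)"
  and delta_eq: "\<delta> = (a1 - ws * real nr1) * (a2 - ws * real nr2) - wd\<^sup>2 * real nr1 * real nr2"
  using nr1_le nr2_le by (simp_all add: of_nat_diff power2_eq_square algebra_simps)

definition tws1 :: real where "tws1 = - (\<gamma>11 / \<delta>)"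
definition tws2 :: real where "tws2 = - (\<gamma>21 / \<delta>)"
definition twd :: real where "twd = wd / \<delta>"

abbreviation resolvent :: "real mat" where
  "resolvent \<equiv> four_block_mat
     ((1/a1) \<cdot>\<^sub>m (1\<^sub>m nr1 - tws1 \<cdot>\<^sub>m outer (ones_vec nr1) (ones_vec nr1)))
     (twd \<cdot>\<^sub>m outer (ones_vec nr1) (ones_vec nr2))
     (twd \<cdot>\<^sub>m outer (ones_vec nr2) (ones_vec nr1))
     ((1/a2) \<cdot>\<^sub>m (1\<^sub>m nr2 - tws2 \<cdot>\<^sub>m outer (ones_vec nr2) (ones_vec nr2)))"

lemma resolvent_eq_two_block_mat:
  "resolvent = two_block_mat nr1 nr2 (\<lambda>x. if x then 1 / a1 else 1 / a2)
     (\<lambda>x y. if x \<noteq> y then wd / \<delta> else if x then \<gamma>11 / (a1 * \<delta>) else \<gamma>21 / (a2 * \<delta>))"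
  unfolding four_block_mat_eq_two_block_mat tws1_def tws2_def twd_def
  by (rule arg_cong[where f = "two_block_mat nr1 nr2 _"]) (auto intro!: ext)

lemma inverts_resolvent:
  "inverts_mat (1\<^sub>m (nr1 + nr2) - Abar ws wd n1 n2 nr1 nr2) resolvent"
  "inverts_mat resolvent (1\<^sub>m (nr1 + nr2) - Abar ws wd n1 n2 nr1 nr2)"
  unfolding one_minus_Abar_eq_two_block_mat[OF nr1_le nr2_le normalized] resolvent_eq_two_block_mat
  using two_block_mat_inverse(1,2)[OF denominators_nonzero gamma11_eq gamma21_eq delta_eq] by simp_all

lemma resolvent_mult_Bbar_mult_vec:
  assumes "dim_vec xs = (n1 - nr1) + (n2 - nr2)"
  defines "S1 \<equiv> \<Sum>q<n1 - nr1. xs $ q" and "S2 \<equiv> \<Sum>q\<in>{n1 - nr1..<(n1 - nr1) + (n2 - nr2)}. xs $ q"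
  shows "resolvent *\<^sub>v (Bbar ws wd n1 n2 nr1 nr2 *\<^sub>v xs)
    = ((\<gamma>11 * S1 + \<gamma>12 * S2) / \<delta> \<cdot>\<^sub>v ones_vec nr1) @\<^sub>v
      ((\<gamma>21 * S2 + \<gamma>22 * S1) / \<delta> \<cdot>\<^sub>v ones_vec nr2)"
proof -
  have wd_a_eq: "\<gamma>12 = wd * a2" "\<gamma>22 = wd * a1"
    by (simp_all add: algebra_simps)
  have "resolvent *\<^sub>v (Bbar ws wd n1 n2 nr1 nr2 *\<^sub>v xs) =
    two_block_mat nr1 nr2 (\<lambda>x. if x then 1 / a1 else 1 / a2)
      (\<lambda>x y. if x \<noteq> y then wd / \<delta> else if x then \<gamma>11 / (a1 * \<delta>) else \<gamma>21 / (a2 * \<delta>))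
    *\<^sub>v two_block_vec nr1 nr2 (\<lambda>x. if x then ws * S1 + wd * S2 else wd * S1 + ws * S2)"
    unfolding resolvent_eq_two_block_mat S1_def S2_def Bbar_mult_vec[OF nr1_le nr2_le assms(1) normalized] ..
  also have "\<dots> = two_block_vec nr1 nr2
      (\<lambda>x. if x then (\<gamma>11 * S1 + wd * a2 * S2) / \<delta> else (\<gamma>21 * S2 + wd * a1 * S1) / \<delta>)"
    by (rule two_block_mat_inverse(3)[OF denominators_nonzero gamma11_eq gamma21_eq delta_eq])
  also have "\<dots> = ((\<gamma>11 * S1 + \<gamma>12 * S2) / \<delta> \<cdot>\<^sub>v ones_vec nr1) @\<^sub>v
      ((\<gamma>21 * S2 + \<gamma>22 * S1) / \<delta> \<cdot>\<^sub>v ones_vec nr2)"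
    unfolding two_block_vec_eq_append wd_a_eq by simp
  finally show ?thesis .
qed

end

theorem theorem3:
  fixes n1 n2 nr1 nr2 :: nat and ws wd :: real and xs :: "real vec"
  assumes "0 < nr1" "nr1 \<le> n1" "0 < nr2" "nr2 \<le> n2" "nr1 + nr2 < n1 + n2"
    and "ws > 0" "wd > 0" "ws \<noteq> wd"
    and "ws * (real n1 ^ 2 + real n2 ^ 2) + 2 * wd * real n1 * real n2 = 1"
    and "dim_vec xs = (n1 - nr1) + (n2 - nr2)"
  shows "let ns1 = n1 - nr1; ns2 = n2 - nr2;
             a1 = ws * real n1 + wd * real n2; a2 = ws * real n2 + wd * real n1;
             S1 = (\<Sum>q<ns1. xs $ q); S2 = (\<Sum>q\<in>{ns1..<ns1+ns2}. xs $ q);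
             g11 = ws*wd*real n1 + wd^2*real nr2 + ws^2*real ns2;
             g12 = wd*(wd*real n1 + ws*real n2);
             g21 = ws*wd*real n2 + wd^2*real nr1 + ws^2*real ns1;
             g22 = wd*(wd*real n2 + ws*real n1);
             \<delta> = ws^2*real ns1*real ns2 + ws*wd*(real n1*real ns1 + real n2*real ns2)
                 + wd^2*(real n1*real n2 - real nr1*real nr2);
             \<chi>1 = (g11*S1 + g12*S2) / \<delta>; \<chi>2 = (g21*S2 + g22*S1) / \<delta>;
             IA = 1\<^sub>m (nr1+nr2) - Abar ws wd n1 n2 nr1 nr2
         in \<exists>tws1 tws2 twd.
              (let M = four_block_mat
                   ((1/a1) \<cdot>\<^sub>m (1\<^sub>m nr1 - tws1 \<cdot>\<^sub>m outer (ones_vec nr1) (ones_vec nr1)))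
                   (twd \<cdot>\<^sub>m outer (ones_vec nr1) (ones_vec nr2))
                   (twd \<cdot>\<^sub>m outer (ones_vec nr2) (ones_vec nr1))
                   ((1/a2) \<cdot>\<^sub>m (1\<^sub>m nr2 - tws2 \<cdot>\<^sub>m outer (ones_vec nr2) (ones_vec nr2)))
               in inverts_mat IA M \<and> inverts_mat M IA \<and>
                  M *\<^sub>v (Bbar ws wd n1 n2 nr1 nr2 *\<^sub>v xs)
                    = (\<chi>1 \<cdot>\<^sub>v ones_vec nr1) @\<^sub>v (\<chi>2 \<cdot>\<^sub>v ones_vec nr2))"
proof -
  interpret two_community_gossip n1 n2 nr1 nr2 ws wd
    using assms(2,4-7,9) by unfold_locales
  show ?thesis
    unfolding Let_def using inverts_resolvent resolvent_mult_Bbar_mult_vec[OF assms(10)] by blast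
qed

end
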